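(* In the model described in the context (for any $n>2$, any $\mu\in(0,1)$, any finite set $Q$ of full-support conditional distributions, any collection $\mathcal{R}$ of admissible DAGs, any ideal policy $d^*\in D$ and any symmetric convex cost function $C$ with $C(0)=C'(0)=0$), an equilibrium $(\alpha,\sigma)$ exists.
   Context: Let $n>2$ and $X=X_1\times\cdots\times X_n$ with $X_i=\{0,1\}$. For $x\in X$, write $a=x_1$ (action) and $y=x_n$ (consequence). For $N\subseteq\{1,\dots,n\}$, $X_N=\times_{i\in N}X_i$. Let $Q$ be a finite set of conditional distributions of $(x_2,\dots,x_{n-1})$ given $(x_1,x_n)$, each with full support for every $(x_1,x_n)$. For $\alpha,\mu\in(0,1)$, $P_{\alpha,\mu}$ is the set of distributions $p$ on $X$ with $p(a=1)=\alpha$, $p(y=1\mid a)=\mu$ for both values of $a$, and $p(\cdot\mid x_1,x_n)\in Q$. A DAG is a pair $(N,R)$ with $N\subseteq\{1,\dots,n\}$ and $R\subseteq N\times N$ acyclic; $R(i)=\{j\in N: jRi\}$. $\mathcal{R}$ is a (finite) collection of DAGs $(N,R)$ with $\{1,n\}\subseteq N$ and no directed path from $n$ to $1$. A narrative is a pair $s=(p,R)\in P_{\alpha,\mu}\times\mathcal{R}$; it induces $p_R(x_N)=\prod_{i\in N}p(x_i\mid x_{R(i)})$, and $p_R(y\mid a)$ is the conditional derived from $p_R$. Let $D=[\varepsilon,1-\varepsilon]$ for a small $\varepsilon>0$ (policies $d$ = proposed frequency of $a=1$). Gross anticipatory utility: $V(s,d\mid\alpha)=d\,p_R(y=1\mid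 a=1)+(1-d)\,p_R(y=1\mid a=0)$. With ideal policy $d^*\in D$ and a symmetric convex cost function $C$ with $C(0)=C'(0)=0$, net anticipatory utility is $U(s,d\mid\alpha)=V(s,d\mid\alpha)-C(d-d^* )$. An equilibrium is a pair of $\alpha\in[0,1]$ and a probability distribution $\sigma$ over narrative-policy pairs $(s,d)\in P_{\alpha,\mu}\times\mathcal{R}\times D$ such that every element of the support of $\sigma$ maximizes $U(s,d\mid\alpha)$ over $P_{\alpha,\mu}\times\mathcal{R}\times D$, and $\alpha=\sum_{(s,d)}\sigma(s,d)\,d$. *)

theory Defs
  imports "HOL-Probability.Probability"
begin

(* Coordinate 1 is the action a,
  coordinate n the consequence y; True encodes the value 1. *)

definition Xs :: "nat set \<Rightarrow> (nat \<Rightarrow> bool) set" where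
  "Xs N = (N \<rightarrow>\<^sub>E (UNIV :: bool set))"

definition marg :: "nat \<Rightarrow> ((nat \<Rightarrow> bool) \<Rightarrow> real) \<Rightarrow> nat set \<Rightarrow> (nat \<Rightarrow> bool) \<Rightarrow> real" where
  "marg n p S z = (\<Sum>x\<in>Xs {1..n}. if (\<forall>i\<in>S. x i = z i) then p x else 0)"

definition cond :: "nat \<Rightarrow> ((nat \<Rightarrow> bool) \<Rightarrow> real) \<Rightarrow> nat \<Rightarrow> nat set \<Rightarrow> (nat \<Rightarrow> bool) \<Rightarrow> real" where
  "cond n p i S z = marg n p (insert i S) z / marg n p S z"

definition parents :: "(nat \<times> nat) set \<Rightarrow> nat set \<Rightarrow> nat \<Rightarrow> nat set" where
  "parents R N i = {j \<in> N. (j, i) \<in> R}"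

definition factorized :: "nat \<Rightarrow> ((nat \<Rightarrow> bool) \<Rightarrow> real) \<Rightarrow> nat set \<Rightarrow> (nat \<times> nat) set \<Rightarrow> (nat \<Rightarrow> bool) \<Rightarrow> real" where
  "factorized n p N R z = (\<Prod>i\<in>N. cond n p i (parents R N i) z)"

definition pR_y1_given_a :: "nat \<Rightarrow> ((nat \<Rightarrow> bool) \<Rightarrow> real) \<Rightarrow> nat set \<Rightarrow> (nat \<times> nat) set \<Rightarrow> bool \<Rightarrow> real" where
  "pR_y1_given_a n p N R a0 =
     (\<Sum>z\<in>{z \<in> Xs N. z 1 = a0 \<and> z n}. factorized n p N R z) /
     (\<Sum>z\<in>{z \<in> Xs N. z 1 = a0}. factorized n p N R z)"

definition V :: "nat \<Rightarrow> ((nat \<Rightarrow> bool) \<Rightarrow> real) \<Rightarrow> nat set \<times> (nat \<times> nat) set \<Rightarrow> real \<Rightarrow> real" where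
  "V n p G d = (case G of (N, R) \<Rightarrow>
      d * pR_y1_given_a n p N R True + (1 - d) * pR_y1_given_a n p N R False)"

definition U :: "nat \<Rightarrow> (real \<Rightarrow> real) \<Rightarrow> real \<Rightarrow> ((nat \<Rightarrow> bool) \<Rightarrow> real) \<Rightarrow> nat set \<times> (nat \<times> nat) set \<Rightarrow> real \<Rightarrow> real" where
  "U n C dstar p G d = V n p G d - C (d - dstar)"

definition full_support_cond :: "nat \<Rightarrow> (bool \<Rightarrow> bool \<Rightarrow> (nat \<Rightarrow> bool) \<Rightarrow> real) \<Rightarrow> bool" where
  "full_support_cond n q \<longleftrightarrow>
     (\<forall>a y. (\<forall>z\<in>Xs {2..n-1}. q a y z > 0) \<and> (\<Sum>z\<in>Xs {2..n-1}. q a y z) = 1)"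

(* P_{alpha,mu}: p(a=1)=alpha, p(y=1|a)=mu for both a, p(.|x_1,x_n) \<in> Q,
  written out as the factorization p(x) = p(a) p(y|a) q(x_2..x_{n-1} | a, y). *)
definition Pset :: "nat \<Rightarrow> (bool \<Rightarrow> bool \<Rightarrow> (nat \<Rightarrow> bool) \<Rightarrow> real) set \<Rightarrow> real \<Rightarrow> real
                     \<Rightarrow> ((nat \<Rightarrow> bool) \<Rightarrow> real) set" where
  "Pset n Q \<alpha> \<mu> = {p. \<exists>q\<in>Q. p = (\<lambda>x. if x \<in> Xs {1..n}
        then (if x 1 then \<alpha> else 1 - \<alpha>) * (if x n then \<mu> else 1 - \<mu>)
             * q (x 1) (x n) (restrict x {2..n-1})
        else 0)}"

definition admissible_dag :: "nat \<Rightarrow> nat set \<times> (nat \<times> nat) set \<Rightarrow> bool" where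
  "admissible_dag n G = (case G of (N, R) \<Rightarrow>
      N \<subseteq> {1..n} \<and> R \<subseteq> N \<times> N \<and> acyclic R \<and> {1, n} \<subseteq> N \<and> (n, 1) \<notin> R\<^sup>+)"

(* Equilibrium (alpha, sigma); sigma is a probability distribution over
  narrative-policy pairs ((p,(N,R)), d), encoded as triples (p,(N,R),d). *)
definition equilibrium :: "nat \<Rightarrow> (bool \<Rightarrow> bool \<Rightarrow> (nat \<Rightarrow> bool) \<Rightarrow> real) set
      \<Rightarrow> (nat set \<times> (nat \<times> nat) set) set \<Rightarrow> real \<Rightarrow> real \<Rightarrow> (real \<Rightarrow> real) \<Rightarrow> real
      \<Rightarrow> real \<Rightarrow> (((nat \<Rightarrow> bool) \<Rightarrow> real) \<times> (nat set \<times> (nat \<times> nat) set) \<times> real) pmf \<Rightarrow> bool" where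
  "equilibrium n Q Rs \<mu> \<epsilon> C dstar \<alpha> \<sigma> \<longleftrightarrow>
     \<alpha> \<in> {0..1} \<and>
     (\<forall>(p, G, d) \<in> set_pmf \<sigma>.
        p \<in> Pset n Q \<alpha> \<mu> \<and> G \<in> Rs \<and> d \<in> {\<epsilon>..1 - \<epsilon>} \<and>
        (\<forall>p' \<in> Pset n Q \<alpha> \<mu>. \<forall>G' \<in> Rs. \<forall>d' \<in> {\<epsilon>..1 - \<epsilon>}.
            U n C dstar p' G' d' \<le> U n C dstar p G d)) \<and>
     \<alpha> = measure_pmf.expectation \<sigma> (\<lambda>(p, G, d). d)"

end

theory Submission
  imports Defs
begin

(* Restrict the population mean alpha to the policy interval D. For fixed alpha the
  anticipatory utility is continuous in (alpha, d), so the best responses form a closed graph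
  over D \<times> D with nonempty sections. The states alpha admitting a best-response policy
  d \<ge> alpha, and those admitting one with d \<le> alpha, then form two closed sets covering D and
  containing its left and right endpoint respectively. By connectedness of D some alpha lies
  in both, and a suitable mixture of the two best responses has mean policy alpha. *)

definition best_response :: "('k \<Rightarrow> 'a \<Rightarrow> 'b \<Rightarrow> real) \<Rightarrow> 'k set \<Rightarrow> 'b set \<Rightarrow> 'a \<Rightarrow> 'k \<Rightarrow> 'b \<Rightarrow> bool"
  where "best_response \<Phi> K B x k y \<longleftrightarrow> k \<in> K \<and> y \<in> B \<and> (\<forall>k'\<in>K. \<forall>y'\<in>B. \<Phi> k' x y' \<le> \<Phi> k x y)"

lemma closed_best_response_graph:
  fixes \<Phi> :: "'k \<Rightarrow> 'a::topological_space \<Rightarrow> 'b::topological_space \<Rightarrow> real"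
  assumes "finite K" "closed A" "closed B"
    and "\<And>k. k \<in> K \<Longrightarrow> continuous_on (A \<times> B) (\<lambda>(x, y). \<Phi> k x y)"
  shows "closed {(x, y) \<in> A \<times> B. \<exists>k. best_response \<Phi> K B x k y}"
proof -
  have "closed {z \<in> A \<times> B. \<Phi> k' (fst z) y' \<le> \<Phi> k (fst z) (snd z)}"
    if "k \<in> K" "k' \<in> K" "y' \<in> B" for k k' y'
  proof (rule continuous_on_closed_Collect_le)
    have "continuous_on (A \<times> B) (\<lambda>z. (fst z, y'))"
      by (intro continuous_intros)
    moreover have "(\<lambda>z. (fst z, y')) ` (A \<times> B) \<subseteq> A \<times> B" using \<open>y' \<in> B\<close> by auto
    ultimately show "continuous_on (A \<times> B) (\<lambda>z. \<Phi> k' (fst z) y')"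
      using continuous_on_compose2[OF assms(4)[OF \<open>k' \<in> K\<close>]] by fastforce
    show "continuous_on (A \<times> B) (\<lambda>z. \<Phi> k (fst z) (snd z))"
      using assms(4)[OF \<open>k \<in> K\<close>] by (simp add: case_prod_unfold)
  qed (use assms in \<open>intro closed_Times\<close>)
  then have "closed (A \<times> B \<inter> (\<Union>k\<in>K. \<Inter>(k', y')\<in>K \<times> B.
      {z \<in> A \<times> B. \<Phi> k' (fst z) y' \<le> \<Phi> k (fst z) (snd z)}))"
    using assms by (intro closed_Int closed_Times closed_UN closed_INT) auto
  moreover have "{(x, y) \<in> A \<times> B. \<exists>k. best_response \<Phi> K B x k y}
      = A \<times> B \<inter> (\<Union>k\<in>K. \<Inter>(k', y')\<in>K \<times> B.
          {z \<in> A \<times> B. \<Phi> k' (fst z) y' \<le> \<Phi> k (fst z) (snd z)})"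
    unfolding best_response_def by (auto; blast)
  ultimately show ?thesis by simp
qed

lemma best_response_exists:
  fixes \<Phi> :: "'k \<Rightarrow> 'a \<Rightarrow> 'b::topological_space \<Rightarrow> real"
  assumes "finite K" "K \<noteq> {}" "compact B" "B \<noteq> {}"
    and "\<And>k. k \<in> K \<Longrightarrow> continuous_on B (\<Phi> k x)"
  shows "\<exists>k y. best_response \<Phi> K B x k y"
proof -
  have "compact (\<Union>k\<in>K. \<Phi> k x ` B)"
    using assms by (intro compact_UN compact_continuous_image) auto
  moreover have "(\<Union>k\<in>K. \<Phi> k x ` B) \<noteq> {}" using assms by auto
  ultimately obtain m where "m \<in> (\<Union>k\<in>K. \<Phi> k x ` B)" "\<forall>t \<in> (\<Union>k\<in>K. \<Phi> k x ` B). t \<le> m"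
    by (meson compact_attains_sup)
  then show ?thesis unfolding best_response_def by fastforce
qed

lemma compact_relation_straddles_diagonal:
  fixes a b :: real and S :: "(real \<times> real) set"
  assumes "a \<le> b" "compact S" "S \<subseteq> {a..b} \<times> {a..b}"
    and "\<And>x. x \<in> {a..b} \<Longrightarrow> \<exists>y. (x, y) \<in> S"
  shows "\<exists>x\<in>{a..b}. \<exists>y1 y2. (x, y1) \<in> S \<and> (x, y2) \<in> S \<and> y2 \<le> x \<and> x \<le> y1"
proof -
  define L where "L = fst ` (S \<inter> {z. fst z \<le> snd z})"
  define R where "R = fst ` (S \<inter> {z. snd z \<le> fst z})"
  have in_L: "x \<in> L" if "(x, y) \<in> S" "x \<le> y" for x y
    unfolding L_def using that by (intro rev_image_eqI[of "(x, y)"]) auto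
  have in_R: "x \<in> R" if "(x, y) \<in> S" "y \<le> x" for x y
    unfolding R_def using that by (intro rev_image_eqI[of "(x, y)"]) auto
  have "closed L"
    unfolding L_def using assms(2)
    by (intro compact_imp_closed compact_continuous_image compact_Int_closed closed_Collect_le
        continuous_intros)
  moreover have "closed R"
    unfolding R_def using assms(2)
    by (intro compact_imp_closed compact_continuous_image compact_Int_closed closed_Collect_le
        continuous_intros)
  moreover have "{a..b} \<subseteq> L \<union> R"
  proof
    fix x assume "x \<in> {a..b}"
    then obtain y where "(x, y) \<in> S" using assms(4) by blast
    then show "x \<in> L \<union> R" using in_L in_R by (cases "x \<le> y") auto
  qed
  moreover have "L \<inter> {a..b} \<noteq> {}"
  proof -
    obtain y where "(a, y) \<in> S" using assms(1,4) by auto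
    moreover have "a \<le> y" using calculation assms(3) by auto
    ultimately have "a \<in> L" by (rule in_L)
    then show ?thesis using assms(1) by auto
  qed
  moreover have "R \<inter> {a..b} \<noteq> {}"
  proof -
    obtain y where "(b, y) \<in> S" using assms(1,4) by auto
    moreover have "y \<le> b" using calculation assms(3) by auto
    ultimately have "b \<in> R" by (rule in_R)
    then show ?thesis using assms(1) by auto
  qed
  ultimately have "L \<inter> R \<inter> {a..b} \<noteq> {}"
    using connected_Icc[of a b] unfolding connected_closed by blast
  then obtain x where "x \<in> {a..b}" "x \<in> L" "x \<in> R" by blast
  then show ?thesis unfolding L_def R_def by force
qed

lemma best_responses_straddling:
  fixes \<Phi> :: "'k \<Rightarrow> real \<Rightarrow> real \<Rightarrow> real"
  assumes "a \<le> b" "finite K" "K \<noteq> {}"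
    and "\<And>k. k \<in> K \<Longrightarrow> continuous_on ({a..b} \<times> {a..b}) (\<lambda>(x, y). \<Phi> k x y)"
  shows "\<exists>x\<in>{a..b}. \<exists>k1 y1 k2 y2. best_response \<Phi> K {a..b} x k1 y1 \<and>
    best_response \<Phi> K {a..b} x k2 y2 \<and> y2 \<le> x \<and> x \<le> y1"
proof -
  define S where "S = {(x, y) \<in> {a..b} \<times> {a..b}. \<exists>k. best_response \<Phi> K {a..b} x k y}"
  have "S \<subseteq> {a..b} \<times> {a..b}" by (auto simp: S_def)
  moreover have "closed S"
    unfolding S_def by (intro closed_best_response_graph assms(2,4) closed_atLeastAtMost)
  ultimately have "compact S"
    using compact_Int_closed[OF compact_Times[OF compact_Icc compact_Icc]] by (metis Int_absorb1)
  moreover have "\<exists>y. (x, y) \<in> S" if "x \<in> {a..b}" for x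
  proof -
    have slice: "continuous_on {a..b} (Pair x)" "Pair x ` {a..b} \<subseteq> {a..b} \<times> {a..b}"
      using that by (auto intro: continuous_intros)
    have "continuous_on {a..b} (\<Phi> k x)" if "k \<in> K" for k
      using continuous_on_compose2[OF assms(4)[OF that] slice] by simp
    moreover have "{a..b} \<noteq> {}" using assms(1) by simp
    ultimately obtain k y where "best_response \<Phi> K {a..b} x k y"
      using best_response_exists[OF assms(2,3) compact_Icc, of a b \<Phi> x] by blast
    then show ?thesis using that unfolding S_def best_response_def by blast
  qed
  ultimately obtain x y1 y2 where "x \<in> {a..b}" "(x, y1) \<in> S" "(x, y2) \<in> S" "y2 \<le> x" "x \<le> y1"
    using compact_relation_straddles_diagonal[OF assms(1) _ \<open>S \<subseteq> {a..b} \<times> {a..b}\<close>] by blast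
  moreover from this have "\<exists>k. best_response \<Phi> K {a..b} x k y1" "\<exists>k. best_response \<Phi> K {a..b} x k y2"
    by (simp_all add: S_def)
  ultimately show ?thesis by blast
qed

lemma two_point_pmf_with_mean:
  fixes f :: "'a \<Rightarrow> real"
  assumes "f u \<le> m" "m \<le> f v"
  shows "\<exists>\<sigma>. set_pmf \<sigma> \<subseteq> {u, v} \<and> measure_pmf.expectation \<sigma> f = m"
proof -
  obtain w where w: "w \<in> {0..1}" "m = f v * w + f u * (1 - w)"
  proof (cases "f u = f v")
    case True then show ?thesis using assms that[of 1] by auto
  next
    case False
    then have "f u < f v" using assms by auto
    define w where "w = (m - f u) / (f v - f u)"
    have "f v * w + f u * (1 - w) = f u + (f v - f u) * w" by (simp add: algebra_simps)
    also have "\<dots> = m" using \<open>f u < f v\<close> by (simp add: w_def)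
    finally show ?thesis
      using assms \<open>f u < f v\<close> by (intro that[of w]) (auto simp: w_def field_simps)
  qed
  define \<sigma> where "\<sigma> = map_pmf (\<lambda>b. if b then v else u) (bernoulli_pmf w)"
  have "set_pmf \<sigma> \<subseteq> {u, v}" by (auto simp: \<sigma>_def)
  moreover have "measure_pmf.expectation \<sigma> f = m"
    using w by (simp add: \<sigma>_def)
  ultimately show ?thesis by blast
qed

definition joint_dist :: "nat \<Rightarrow> real \<Rightarrow> (bool \<Rightarrow> bool \<Rightarrow> (nat \<Rightarrow> bool) \<Rightarrow> real) \<Rightarrow> real
    \<Rightarrow> (nat \<Rightarrow> bool) \<Rightarrow> real" where
  "joint_dist n \<mu> q \<alpha> = (\<lambda>x. if x \<in> Xs {1..n}
        then (if x 1 then \<alpha> else 1 - \<alpha>) * (if x n then \<mu> else 1 - \<mu>)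
             * q (x 1) (x n) (restrict x {2..n-1})
        else 0)"

lemma Pset_eq_image: "Pset n Q \<alpha> \<mu> = (\<lambda>q. joint_dist n \<mu> q \<alpha>) ` Q"
  by (auto simp: Pset_def joint_dist_def)

lemma joint_dist_pos:
  assumes "0 < \<alpha>" "\<alpha> < 1" "0 < \<mu>" "\<mu> < 1" "full_support_cond n q" "x \<in> Xs {1..n}"
  shows "joint_dist n \<mu> q \<alpha> x > 0"
proof -
  have "restrict x {2..n-1} \<in> Xs {2..n-1}" by (simp add: Xs_def)
  then have "q (x 1) (x n) (restrict x {2..n-1}) > 0"
    using assms(5) by (simp add: full_support_cond_def)
  then show ?thesis using assms by (simp add: joint_dist_def)
qed

lemma continuous_on_joint_dist: "continuous_on I (\<lambda>\<alpha>. joint_dist n \<mu> q \<alpha> x)"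
  unfolding joint_dist_def
  by (cases "x \<in> Xs {1..n}"; cases "x 1") (auto intro!: continuous_intros)

lemma finite_Xs: "finite N \<Longrightarrow> finite (Xs N)"
  by (simp add: Xs_def finite_PiE)

lemma marg_eq_sum: "marg n p S z = (\<Sum>x\<in>{x \<in> Xs {1..n}. \<forall>i\<in>S. x i = z i}. p x)"
  unfolding marg_def by (simp add: sum.inter_filter finite_Xs)

lemma marg_pos:
  assumes "S \<subseteq> {1..n}" "\<forall>x\<in>Xs {1..n}. p x > 0"
  shows "marg n p S z > 0"
proof -
  have "restrict z {1..n} \<in> {x \<in> Xs {1..n}. \<forall>i\<in>S. x i = z i}"
    using assms(1) by (auto simp: Xs_def)
  then show ?thesis
    unfolding marg_eq_sum using assms(2) by (intro sum_pos) (auto simp: finite_Xs)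
qed

lemma cond_pos:
  assumes "i \<in> {1..n}" "S \<subseteq> {1..n}" "\<forall>x\<in>Xs {1..n}. p x > 0"
  shows "cond n p i S z > 0"
  using assms marg_pos[of S n p z] marg_pos[of "insert i S" n p z] by (simp add: cond_def)

lemma factorized_pos:
  assumes "N \<subseteq> {1..n}" "\<forall>x\<in>Xs {1..n}. p x > 0"
  shows "factorized n p N R z > 0"
  unfolding factorized_def using assms
  by (intro prod_pos ballI cond_pos) (auto simp: parents_def)

lemma sum_factorized_pos:
  assumes "N \<subseteq> {1..n}" "1 \<in> N" "\<forall>x\<in>Xs {1..n}. p x > 0"
  shows "(\<Sum>z\<in>{z \<in> Xs N. z 1 = b}. factorized n p N R z) > 0"
proof -
  have "finite N" using assms(1) finite_subset by blast
  have witness: "restrict (\<lambda>_. b) N \<in> {z \<in> Xs N. z 1 = b}"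
    using assms(2) by (simp add: Xs_def)
  show ?thesis using \<open>finite N\<close> factorized_pos[OF assms(1,3)]
    by (intro sum_pos2[OF _ witness]) (auto simp: finite_Xs less_imp_le)
qed

lemma continuous_on_marg:
  "(\<And>x. continuous_on I (\<lambda>a. P a x)) \<Longrightarrow> continuous_on I (\<lambda>a. marg n (P a) S z)"
  unfolding marg_eq_sum by (intro continuous_on_sum)

lemma continuous_on_cond:
  assumes "\<And>x. continuous_on I (\<lambda>a. P a x)" "\<forall>a\<in>I. \<forall>x\<in>Xs {1..n}. P a x > 0"
    and "i \<in> {1..n}" "S \<subseteq> {1..n}"
  shows "continuous_on I (\<lambda>a. cond n (P a) i S z)"
  unfolding cond_def using assms marg_pos[of S n]
  by (intro continuous_on_divide continuous_on_marg) (auto simp: less_le)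

lemma continuous_on_factorized:
  assumes "\<And>x. continuous_on I (\<lambda>a. P a x)" "\<forall>a\<in>I. \<forall>x\<in>Xs {1..n}. P a x > 0"
    and "N \<subseteq> {1..n}"
  shows "continuous_on I (\<lambda>a. factorized n (P a) N R z)"
  unfolding factorized_def using assms
  by (intro continuous_on_prod continuous_on_cond) (auto simp: parents_def)

lemma continuous_on_pR_y1_given_a:
  assumes "\<And>x. continuous_on I (\<lambda>a. P a x)" "\<forall>a\<in>I. \<forall>x\<in>Xs {1..n}. P a x > 0"
    and "N \<subseteq> {1..n}" "1 \<in> N"
  shows "continuous_on I (\<lambda>a. pR_y1_given_a n (P a) N R b)"
  unfolding pR_y1_given_a_def using assms sum_factorized_pos[OF assms(3,4)]
  by (intro continuous_on_divide continuous_on_sum continuous_on_factorized) (auto simp: less_le)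

definition narrative_utility :: "nat \<Rightarrow> real \<Rightarrow> (real \<Rightarrow> real) \<Rightarrow> real
    \<Rightarrow> (bool \<Rightarrow> bool \<Rightarrow> (nat \<Rightarrow> bool) \<Rightarrow> real) \<times> (nat set \<times> (nat \<times> nat) set) \<Rightarrow> real \<Rightarrow> real \<Rightarrow> real"
  where "narrative_utility n \<mu> C dstar k \<alpha> d = U n C dstar (joint_dist n \<mu> (fst k) \<alpha>) (snd k) d"

lemma continuous_on_narrative_utility:
  assumes "0 < \<mu>" "\<mu> < 1" "full_support_cond n (fst k)" "admissible_dag n (snd k)"
    and "A \<subseteq> {0<..<1}" "continuous_on UNIV C"
  shows "continuous_on (A \<times> B) (\<lambda>(\<alpha>, d). narrative_utility n \<mu> C dstar k \<alpha> d)"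
proof -
  obtain q N R where k: "k = (q, N, R)" by (metis prod.collapse)
  have "N \<subseteq> {1..n}" "1 \<in> N" using assms(4) by (auto simp: k admissible_dag_def)
  moreover have "\<forall>\<alpha>\<in>A. \<forall>x\<in>Xs {1..n}. joint_dist n \<mu> q \<alpha> x > 0"
    using assms(1-3,5) by (intro ballI joint_dist_pos) (auto simp: k)
  ultimately have "continuous_on A (\<lambda>\<alpha>. pR_y1_given_a n (joint_dist n \<mu> q \<alpha>) N R b)" for b
    by (intro continuous_on_pR_y1_given_a continuous_on_joint_dist)
  then have pR: "continuous_on (A \<times> B) (\<lambda>z. pR_y1_given_a n (joint_dist n \<mu> q (fst z)) N R b)" for b
    by (rule continuous_on_compose2) (auto intro: continuous_intros)
  have "continuous_on (A \<times> B) (\<lambda>z. C (snd z - dstar))"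
    by (intro continuous_on_compose2[OF assms(6)] continuous_intros) auto
  with pR show ?thesis
    unfolding k narrative_utility_def U_def V_def case_prod_unfold by (intro continuous_intros) auto
qed

lemma equilibriumI:
  assumes "\<alpha> \<in> {0..1}" "measure_pmf.expectation \<sigma> (\<lambda>(p, G, d). d) = \<alpha>"
    and "\<And>s. s \<in> set_pmf \<sigma> \<Longrightarrow> \<exists>q G d. s = (joint_dist n \<mu> q \<alpha>, G, d) \<and>
      best_response (narrative_utility n \<mu> C dstar) (Q \<times> Rs) {\<epsilon>..1 - \<epsilon>} \<alpha> (q, G) d"
  shows "equilibrium n Q Rs \<mu> \<epsilon> C dstar \<alpha> \<sigma>"
proof -
  have "case s of (p, G, d) \<Rightarrow> p \<in> Pset n Q \<alpha> \<mu> \<and> G \<in> Rs \<and> d \<in> {\<epsilon>..1 - \<epsilon>} \<and>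
      (\<forall>p'\<in>Pset n Q \<alpha> \<mu>. \<forall>G'\<in>Rs. \<forall>d'\<in>{\<epsilon>..1 - \<epsilon>}. U n C dstar p' G' d' \<le> U n C dstar p G d)"
    if s_in: "s \<in> set_pmf \<sigma>" for s
  proof -
    obtain q G d where "s = (joint_dist n \<mu> q \<alpha>, G, d)"
      and "best_response (narrative_utility n \<mu> C dstar) (Q \<times> Rs) {\<epsilon>..1 - \<epsilon>} \<alpha> (q, G) d"
      using assms(3)[OF s_in] by blast
    then show ?thesis
      by (simp add: Pset_eq_image best_response_def narrative_utility_def)
  qed
  with assms(1,2) show ?thesis unfolding equilibrium_def by auto
qed

theorem proposition1:
  fixes n :: nat and \<mu> \<epsilon> dstar :: real
    and Q :: "(bool \<Rightarrow> bool \<Rightarrow> (nat \<Rightarrow> bool) \<Rightarrow> real) set"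
    and Rs :: "(nat set \<times> (nat \<times> nat) set) set"
    and C :: "real \<Rightarrow> real"
  assumes "n > 2"
    and "0 < \<mu>" "\<mu> < 1"
    and "finite Q" "Q \<noteq> {}" "\<forall>q\<in>Q. full_support_cond n q"
    and "finite Rs" "Rs \<noteq> {}" "\<forall>G\<in>Rs. admissible_dag n G"
    and "0 < \<epsilon>" "\<epsilon> < 1/2"
    and "dstar \<in> {\<epsilon>..1 - \<epsilon>}"
    and "\<forall>x. C (- x) = C x" "convex_on UNIV C" "C 0 = 0" "(C has_real_derivative 0) (at 0)"
  shows "\<exists>\<alpha> \<sigma>. equilibrium n Q Rs \<mu> \<epsilon> C dstar \<alpha> \<sigma>"
proof -
  define K where "K = Q \<times> Rs"
  have "\<epsilon> \<le> 1 - \<epsilon>" "finite K" "K \<noteq> {}" using assms by (auto simp: K_def)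
  have "continuous_on UNIV C" by (rule convex_on_continuous[OF open_UNIV assms(14)])
  moreover have "{\<epsilon>..1 - \<epsilon>} \<subseteq> {0<..<1}" using assms(10,11) by auto
  ultimately have "continuous_on ({\<epsilon>..1 - \<epsilon>} \<times> {\<epsilon>..1 - \<epsilon>}) (\<lambda>(\<alpha>, d). narrative_utility n \<mu> C dstar k \<alpha> d)"
    if "k \<in> K" for k
    using that assms(2,3,6,9) unfolding K_def by (intro continuous_on_narrative_utility) auto
  then obtain \<alpha> k1 d1 k2 d2 where "\<alpha> \<in> {\<epsilon>..1 - \<epsilon>}" "d2 \<le> \<alpha>" "\<alpha> \<le> d1"
    and best: "best_response (narrative_utility n \<mu> C dstar) K {\<epsilon>..1 - \<epsilon>} \<alpha> k1 d1"
      "best_response (narrative_utility n \<mu> C dstar) K {\<epsilon>..1 - \<epsilon>} \<alpha> k2 d2"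
    using best_responses_straddling[OF \<open>\<epsilon> \<le> 1 - \<epsilon>\<close> \<open>finite K\<close> \<open>K \<noteq> {}\<close>] by blast
  obtain \<sigma> where "measure_pmf.expectation \<sigma> (\<lambda>(p, G, d). d) = \<alpha>" and
    "set_pmf \<sigma> \<subseteq> {(joint_dist n \<mu> (fst k2) \<alpha>, snd k2, d2), (joint_dist n \<mu> (fst k1) \<alpha>, snd k1, d1)}"
    using two_point_pmf_with_mean[of "\<lambda>(p, G, d). d" "(joint_dist n \<mu> (fst k2) \<alpha>, snd k2, d2)" \<alpha>
        "(joint_dist n \<mu> (fst k1) \<alpha>, snd k1, d1)"] \<open>d2 \<le> \<alpha>\<close> \<open>\<alpha> \<le> d1\<close> by auto
  moreover have "\<alpha> \<in> {0..1}" using \<open>\<alpha> \<in> {\<epsilon>..1 - \<epsilon>}\<close> assms(10,11) by auto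
  ultimately have "equilibrium n Q Rs \<mu> \<epsilon> C dstar \<alpha> \<sigma>"
    using best unfolding K_def by (intro equilibriumI) force+
  then show ?thesis by blast
qed

end
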